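(* Let $u(\mathbf t)\in\mathbb C[[t_0,t_1,t_2,\dots]]$ ($t_0=x$) be any solution of the KdV hierarchy, $(\psi,\psi^* )$ any pair of wave functions of $u$, and set $\psi(z)=\psi(z,\mathbf 0)$, $\psi_x(z)=\partial_x\psi(z,\mathbf t)|_{\mathbf t=\mathbf 0}$, similarly $\psi^*(z),\psi_x^*(z)$, and $b(\lambda)=b(\lambda,\mathbf 0)$, $b_x(\lambda)=\partial_xb(\lambda,\mathbf t)|_{\mathbf t=\mathbf 0}$. Then: (i) $D(z,w):=\frac{\psi(z)\psi^*_x(w)-\psi^*(w)\psi_x(z)}{w^2-z^2}$ satisfies $D(z,w)-\frac1{z-w}\in\mathbb C[[z^{-1},w^{-1}]]$, in the sense that there is $F\in\mathbb C[[z^{-1},w^{-1}]]$ with $\psi(z)\psi^*_x(w)-\psi^*(w)\psi_x(z)+(w+z)=(w^2-z^2)F$. (ii) With $K(z,w):=\frac{b(z^2)b_x(w^2)-b(w^2)b_x(z^2)}{2(w^2-z^2)}-\frac{w\,b(z^2)+z\,b(w^2)}{w^2-z^2}$, each of $K(z,w)-\frac{b(z^2)}{z-w}$, $K(z,w)-\frac{b(w^2)}{z-w}$, $K(z,w)-\frac12\frac{b(z^2)+b(w^2)}{z-w}$ lies in $\mathbb C[[z^{-1},w^{-1}]]$, in the sense that, with $M:=b(z^2)b_x(w^2)-b(w^2)b_x(z^2)$, each of $\frac M2+z(b(z^2)-b(w^2))$, $\frac M2-w(b(z^2)-b(w^2))$, $\frac M2+\frac{z-w}2(b(z^2)-b(w^2))$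 equals $(w^2-z^2)$ times an element of $\mathbb C[[z^{-1},w^{-1}]]$.
   Context: KdV hierarchy: $L=\partial_x^2+2u$, $A_k=\frac1{(2k+1)!!}(L^{(2k+1)/2})_+$; $u$ solves it if $\partial L/\partial t_k=[A_k,L]$ for all $k\ge0$. $b(\lambda,\mathbf t)=\sum_{k\ge-1}b_k(\mathbf t)\lambda^{-k-1}$, $b_{-1}=1$, is the unique such series with coefficients in $\mathbb C[[\mathbf t]]$ satisfying $bb_{xx}-\frac12b_x^2-2(\lambda-2u)b^2=-2\lambda$. Wave functions (with $V=\mathbb C[[x]]$ and a ring $\widetilde V$ with $V\subseteq\partial_x\widetilde V\subseteq\widetilde V$): $\xi=\sum_kt_kz^{2k+1}/(2k+1)!!$; a wave function is $\psi=(1+\sum_{m\ge1}\phi_m(\mathbf t)z^{-m})e^{\xi}$ with $L\psi=z^2\psi$, $\partial_{t_k}\psi=A_k\psi$; its dual is the unique $\psi^*=(1+\sum_{m\ge1}\phi^*_m(\mathbf t)z^{-m})e^{-\xi}$ with $L\psi^*=z^2\psi^*$, $\partial_{t_k}\psi^*=A_k\psi^*$, and $\partial_x^i(\psi)\psi^*$ (exponentials cancelling) having zero $z^{-1}$-coefficient for all $i\ge0$. At $\mathbf t=\mathbf0$ the exponentials equal $1$. *)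

theory Defs
  imports Complex_Main "HOL-Library.Poly_Mapping"
begin

text \<open>Monomials are finitely supported exponent vectors; an element of C[[t]] is its
  coefficient function.\<close>
type_synonym mon = "nat \<Rightarrow>\<^sub>0 nat"
type_synonym ps = "mon \<Rightarrow> complex"

definition ps0 :: ps where "ps0 = (\<lambda>_. 0)"
definition ps1 :: ps where "ps1 = (\<lambda>m. if m = 0 then 1 else 0)"
definition ps_add :: "ps \<Rightarrow> ps \<Rightarrow> ps" where "ps_add f g = (\<lambda>m. f m + g m)"
definition ps_sub :: "ps \<Rightarrow> ps \<Rightarrow> ps" where "ps_sub f g = (\<lambda>m. f m - g m)"
definition ps_smult :: "complex \<Rightarrow> ps \<Rightarrow> ps" where "ps_smult c f = (\<lambda>m. c * f m)"
definition ps_mult :: "ps \<Rightarrow> ps \<Rightarrow> ps" where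
  "ps_mult f g = (\<lambda>m. \<Sum>(a,b)\<in>{(a,b). a + b = m}. f a * g b)"
text \<open>partial derivative with respect to t_k (t_0 = x)\<close>
definition ps_deriv :: "nat \<Rightarrow> ps \<Rightarrow> ps" where
  "ps_deriv k f = (\<lambda>m. of_nat (Poly_Mapping.lookup m k + 1) * f (m + Poly_Mapping.single k 1))"
definition ps_at0 :: "ps \<Rightarrow> complex" where "ps_at0 f = f 0"

section \<open>Pseudo-differential operators  P = sum_j P j * d_x^j  (P j = 0 for large j)\<close>

type_synonym pdo = "int \<Rightarrow> ps"

definition pdo_mult :: "pdo \<Rightarrow> pdo \<Rightarrow> pdo" where
  "pdo_mult P Q = (\<lambda>n m. \<Sum>(i,j)\<in>{(i,j). n \<le> i + j \<and> P i \<noteq> ps0 \<and> Q j \<noteq> ps0}.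
      ((of_int i :: complex) gchoose nat (i + j - n)) *
      ps_mult (P i) ((ps_deriv 0 ^^ nat (i + j - n)) (Q j)) m)"

definition pdo_one :: pdo where "pdo_one = (\<lambda>j. if j = 0 then ps1 else ps0)"
definition pdo_pow :: "pdo \<Rightarrow> nat \<Rightarrow> pdo" where "pdo_pow P n = (pdo_mult P ^^ n) pdo_one"
definition pdo_sub :: "pdo \<Rightarrow> pdo \<Rightarrow> pdo" where "pdo_sub P Q = (\<lambda>j. ps_sub (P j) (Q j))"
definition pdo_tderiv :: "nat \<Rightarrow> pdo \<Rightarrow> pdo" where "pdo_tderiv k P = (\<lambda>j. ps_deriv k (P j))"

definition Lop :: "ps \<Rightarrow> pdo" where
  "Lop u = (\<lambda>j. if j = 2 then ps1 else if j = 0 then ps_smult 2 u else ps0)"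

definition sqrtL :: "ps \<Rightarrow> pdo" where
  "sqrtL u = (THE Q. Q 1 = ps1 \<and> (\<forall>j>1. Q j = ps0) \<and> pdo_mult Q Q = Lop u)"

definition dfact :: "nat \<Rightarrow> nat" where "dfact k = (\<Prod>i\<le>k. 2 * i + 1)"

definition Aop :: "ps \<Rightarrow> nat \<Rightarrow> pdo" where
  "Aop u k = (\<lambda>j. if 0 \<le> j then ps_smult (1 / of_nat (dfact k)) (pdo_pow (sqrtL u) (2 * k + 1) j)
                  else ps0)"

definition kdv_solution :: "ps \<Rightarrow> bool" where
  "kdv_solution u \<longleftrightarrow> (\<forall>k. pdo_tderiv k (Lop u) =
      pdo_sub (pdo_mult (Aop u k) (Lop u)) (pdo_mult (Lop u) (Aop u k)))"

text \<open>S n is the coefficient of z^n\<close>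
type_synonym lser = "int \<Rightarrow> ps"

definition lprod :: "lser \<Rightarrow> lser \<Rightarrow> lser" where
  "lprod A B = (\<lambda>n m. \<Sum>(a,b)\<in>{(a,b). a + b = n \<and> A a \<noteq> ps0 \<and> B b \<noteq> ps0}. ps_mult (A a) (B b) m)"

text \<open>series 1 + sum_{m>=1} phi_m z^(-m), given phi (with phi 0 = 1)\<close>
definition neg_ser :: "(nat \<Rightarrow> ps) \<Rightarrow> lser" where
  "neg_ser \<phi> = (\<lambda>n. if n \<le> 0 then \<phi> (nat (- n)) else ps0)"

text \<open>For W e^(s xi):  d_x (W e^(s xi)) = (dz s W) e^(s xi), i.e. dz s = d_x + s z\<close>
definition dz :: "complex \<Rightarrow> lser \<Rightarrow> lser" where
  "dz s W = (\<lambda>n. ps_add (ps_deriv 0 (W n)) (ps_smult s (W (n - 1))))"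

text \<open>For a differential operator P: P (W e^(s xi)) = (twist_app s P W) e^(s xi)\<close>
definition twist_app :: "complex \<Rightarrow> pdo \<Rightarrow> lser \<Rightarrow> lser" where
  "twist_app s P W = (\<lambda>n m. \<Sum>j\<in>{j. 0 \<le> j \<and> P j \<noteq> ps0}. ps_mult (P j) ((dz s ^^ nat j) W n) m)"

text \<open>d_(t_k) (W e^(s xi)) = (tk_app s k W) e^(s xi), since d_(t_k) xi = z^(2k+1)/(2k+1)!!\<close>
definition tk_app :: "complex \<Rightarrow> nat \<Rightarrow> lser \<Rightarrow> lser" where
  "tk_app s k W = (\<lambda>n. ps_add (ps_deriv k (W n))
                     (ps_smult (s / of_nat (dfact k)) (W (n - int (2 * k + 1)))))"

text \<open>psi = (1 + sum phi_m z^(-m)) e^xi is a wave function of u\<close>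
definition wave_function :: "ps \<Rightarrow> (nat \<Rightarrow> ps) \<Rightarrow> bool" where
  "wave_function u \<phi> \<longleftrightarrow> \<phi> 0 = ps1 \<and>
     twist_app 1 (Lop u) (neg_ser \<phi>) = (\<lambda>n. neg_ser \<phi> (n - 2)) \<and>
     (\<forall>k. tk_app 1 k (neg_ser \<phi>) = twist_app 1 (Aop u k) (neg_ser \<phi>))"

text \<open>psi* = (1 + sum phi*_m z^(-m)) e^(-xi) is the dual wave function of psi\<close>
definition dual_wave_function :: "ps \<Rightarrow> (nat \<Rightarrow> ps) \<Rightarrow> (nat \<Rightarrow> ps) \<Rightarrow> bool" where
  "dual_wave_function u \<phi> \<phi>s \<longleftrightarrow> \<phi>s 0 = ps1 \<and>
     twist_app (-1) (Lop u) (neg_ser \<phi>s) = (\<lambda>n. neg_ser \<phi>s (n - 2)) \<and>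
     (\<forall>k. tk_app (-1) k (neg_ser \<phi>s) = twist_app (-1) (Aop u k) (neg_ser \<phi>s)) \<and>
     (\<forall>i. lprod ((dz 1 ^^ i) (neg_ser \<phi>)) (neg_ser \<phi>s) (-1) = ps0)"

text \<open>bb j is b_(j-1), the coefficient of lambda^(-j).  As a Laurent series in lambda:\<close>
definition bser :: "(nat \<Rightarrow> ps) \<Rightarrow> lser" where "bser bb = neg_ser bb"

definition lser_x :: "lser \<Rightarrow> lser" where "lser_x S = (\<lambda>n. ps_deriv 0 (S n))"

text \<open>b b_xx - 1/2 b_x^2 - 2 (lambda - 2u) b^2 = -2 lambda, coefficientwise in lambda\<close>
definition b_equation :: "ps \<Rightarrow> (nat \<Rightarrow> ps) \<Rightarrow> bool" where
  "b_equation u bb \<longleftrightarrow> (let B = bser bb; B2 = lprod B B in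
     (\<forall>n. ps_add (ps_sub (ps_sub (lprod B (lser_x (lser_x B)) n)
                                  (ps_smult (1/2) (lprod (lser_x B) (lser_x B) n)))
                          (ps_smult 2 (B2 (n - 1))))
                  (ps_smult 4 (ps_mult u (B2 n)))
         = (if n = 1 then ps_smult (-2) ps1 else ps0)))"

text \<open>S a b is the coefficient of z^a w^b\<close>
type_synonym ser2 = "int \<Rightarrow> int \<Rightarrow> complex"

definition outer :: "(int \<Rightarrow> complex) \<Rightarrow> (int \<Rightarrow> complex) \<Rightarrow> ser2" where
  "outer f g = (\<lambda>a b. f a * g b)"
definition delta0 :: "int \<Rightarrow> complex" where "delta0 = (\<lambda>a. if a = 0 then 1 else 0)"
definition s2add :: "ser2 \<Rightarrow> ser2 \<Rightarrow> ser2" where "s2add S T = (\<lambda>a b. S a b + T a b)"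
definition s2sub :: "ser2 \<Rightarrow> ser2 \<Rightarrow> ser2" where "s2sub S T = (\<lambda>a b. S a b - T a b)"
definition s2scale :: "complex \<Rightarrow> ser2 \<Rightarrow> ser2" where "s2scale c S = (\<lambda>a b. c * S a b)"
definition mulz :: "ser2 \<Rightarrow> ser2" where "mulz S = (\<lambda>a b. S (a - 1) b)"
definition mulw :: "ser2 \<Rightarrow> ser2" where "mulw S = (\<lambda>a b. S a (b - 1))"
text \<open>element of C[[z^(-1), w^(-1)]]: F i j is the coefficient of z^(-i) w^(-j)\<close>
definition ext2 :: "(nat \<Rightarrow> nat \<Rightarrow> complex) \<Rightarrow> ser2" where
  "ext2 F = (\<lambda>a b. if a \<le> 0 \<and> b \<le> 0 then F (nat (- a)) (nat (- b)) else 0)"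
definition mul_w2_z2 :: "ser2 \<Rightarrow> ser2" where "mul_w2_z2 S = (\<lambda>a b. S a (b - 2) - S (a - 2) b)"

definition div_by_w2_z2 :: "ser2 \<Rightarrow> bool" where
  "div_by_w2_z2 S \<longleftrightarrow> (\<exists>F. S = mul_w2_z2 (ext2 F))"

definition at0 :: "lser \<Rightarrow> int \<Rightarrow> complex" where "at0 W = (\<lambda>n. ps_at0 (W n))"

text \<open>f(z^2) for f = sum_j c j lambda^(-j): coefficient of z^a\<close>
definition sq_ser :: "(nat \<Rightarrow> complex) \<Rightarrow> int \<Rightarrow> complex" where
  "sq_ser c = (\<lambda>a. if a \<le> 0 \<and> even a then c (nat (- a div 2)) else 0)"

end

theory Submission
  imports Defs "HOL-Computational_Algebra.Formal_Power_Series"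
begin
unbundle fps_syntax

text \<open>
  Restrict to the \<open>x\<close>-axis and write \<open>\<psi> = w e\<^sup>x\<^sup>z\<close>, \<open>\<psi>\<^sup>* = y e\<^sup>-\<^sup>x\<^sup>z\<close> with \<open>w\<close>, \<open>y\<close>
  power series in \<open>X = z\<^sup>-\<^sup>1\<close> over \<open>\<complex>[[x]]\<close>.  A series \<open>S(z, w)\<close> of degree at most 1 in
  \<open>z\<close> and in \<open>w\<close> is divisible by \<open>w\<^sup>2 - z\<^sup>2 = (w - z)(w + z)\<close> in \<open>\<complex>[[z\<^sup>-\<^sup>1, w\<^sup>-\<^sup>1]]\<close> as soon as
  \<open>S(z, z) = 0\<close> and \<open>S(z, -z) = 0\<close>.  Part (ii) is then formal, because \<open>b(z\<^sup>2)\<close> is even in \<open>z\<close>.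

  In part (i), \<open>S(z, -z)\<close> is the Wronskian of \<open>\<psi>(z)\<close> and \<open>\<psi>\<^sup>*(-z)\<close>.  Both solve
  \<open>L f = z\<^sup>2 f\<close> and are a series in \<open>X\<close> times \<open>e\<^sup>x\<^sup>z\<close>, so their Wronskian is constant in \<open>x\<close>
  and therefore zero.  \<open>S(z, z) = 0\<close> says that the Wronskian of \<open>\<psi>\<close> and \<open>\<psi>\<^sup>*\<close> is \<open>-2z\<close>.  The wave
  equation trades \<open>z\<^sup>2\<close> for \<open>\<partial>\<^sub>x\<^sup>2 + 2u\<close>, so the residue conditions defining \<open>\<psi>\<^sup>*\<close> make
  \<open>\<psi>\<psi>\<^sup>*\<close> and \<open>\<psi>\<^sub>x\<psi>\<^sup>* - z\<close> even in \<open>z\<close>.  As \<open>\<psi>\<^sup>*(z)\<close> is a multiple of \<open>\<psi>(-z)\<close> (again a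
  vanishing Wronskian), this forces the Wronskian to be \<open>-2z\<close>.
\<close>

section \<open>Series along the \<open>x\<close>-axis\<close>

definition xline :: "ps \<Rightarrow> complex fps" where
  "xline f = Abs_fps (\<lambda>n. f (Poly_Mapping.single 0 n))"

lemma xline_nth: "xline f $ n = f (Poly_Mapping.single 0 n)"
  by (simp add: xline_def)

lemma add_eq_single_iff:
  "a + b = Poly_Mapping.single k (n::nat) \<longleftrightarrow>
     (\<exists>i\<le>n. a = Poly_Mapping.single k i \<and> b = Poly_Mapping.single k (n - i))"
proof
  assume ab: "a + b = Poly_Mapping.single k n"
  have lookup_sum:
      "Poly_Mapping.lookup a j + Poly_Mapping.lookup b j =
        Poly_Mapping.lookup (Poly_Mapping.single k n) j"
    for j
    using ab by (metis lookup_add)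
  have a: "a = Poly_Mapping.single k (Poly_Mapping.lookup a k)"
    by (rule poly_mapping_eqI) (metis lookup_sum add_is_0 lookup_single_eq lookup_single_not_eq)
  have b: "b = Poly_Mapping.single k (Poly_Mapping.lookup b k)"
    by (rule poly_mapping_eqI) (metis lookup_sum add_is_0 lookup_single_eq lookup_single_not_eq)
  have "Poly_Mapping.lookup a k + Poly_Mapping.lookup b k = n"
    using lookup_sum[of k] by simp
  with a b show "\<exists>i\<le>n. a = Poly_Mapping.single k i \<and> b = Poly_Mapping.single k (n - i)"
    by (metis add_diff_cancel_left' le_add1)
qed (auto simp flip: single_add)

lemma xline_mult: "xline (ps_mult f g) = xline f * xline g"
proof (rule fps_ext)
  fix n :: nat
  have pairs: "{(a, b). a + b = Poly_Mapping.single (0::nat) n} =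
      (\<lambda>i. (Poly_Mapping.single 0 i, Poly_Mapping.single 0 (n - i))) ` {0..n}"
    by (auto simp: add_eq_single_iff image_iff simp flip: single_add)
  have inj: "inj_on (\<lambda>i. (Poly_Mapping.single (0::nat) i, Poly_Mapping.single 0 (n - i))) {0..n}"
    by (rule inj_onI) (metis Pair_inject lookup_single_eq)
  show "xline (ps_mult f g) $ n = (xline f * xline g) $ n"
    by (simp add: xline_nth ps_mult_def pairs sum.reindex[OF inj] fps_mult_nth)
qed

lemma xline_deriv: "xline (ps_deriv 0 f) = fps_deriv (xline f)"
  by (rule fps_ext) (simp add: xline_nth ps_deriv_def flip: single_add)

lemma xline_add: "xline (ps_add f g) = xline f + xline g"
  by (rule fps_ext) (simp add: xline_nth ps_add_def)

lemma xline_smult: "xline (ps_smult c f) = fps_const c * xline f"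
  by (rule fps_ext) (simp add: xline_nth ps_smult_def)

lemma xline_ps0 [simp]: "xline ps0 = 0"
  by (rule fps_ext) (simp add: xline_nth ps0_def)

lemma single_eq_0_iff: "Poly_Mapping.single k v = 0 \<longleftrightarrow> v = 0"
  by (metis lookup_single_eq lookup_zero single_zero)

lemma xline_ps1 [simp]: "xline ps1 = 1"
  by (rule fps_ext) (simp add: xline_nth ps1_def single_eq_0_iff)

lemma xline_sum: "xline (\<lambda>m. \<Sum>j\<in>J. F j m) = (\<Sum>j\<in>J. xline (F j))"
  by (rule fps_ext) (simp add: xline_nth fps_sum_nth)

lemma xline_nth_0: "xline f $ 0 = ps_at0 f"
  by (simp add: xline_nth ps_at0_def)

section \<open>Wave functions as power series in \<open>z\<^sup>-\<^sup>1\<close>\<close>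

type_synonym zfps = "complex fps fps"

definition lser_bounded :: "int \<Rightarrow> lser \<Rightarrow> bool" where
  "lser_bounded K S \<longleftrightarrow> (\<forall>n>K. S n = ps0)"

text \<open>\<open>lser_fps K S\<close> is \<open>z\<^sup>-\<^sup>K S\<close>, restricted to the \<open>x\<close>-axis, as a power series in
  \<open>X = z\<^sup>-\<^sup>1\<close>; coefficients of \<open>S\<close> above \<open>z\<^sup>K\<close> are dropped.\<close>
definition lser_fps :: "int \<Rightarrow> lser \<Rightarrow> zfps" where
  "lser_fps K S = Abs_fps (\<lambda>k. xline (S (K - int k)))"

definition deriv_x :: "zfps \<Rightarrow> zfps" where
  "deriv_x f = Abs_fps (\<lambda>k. fps_deriv (f $ k))"

text \<open>The operator \<open>z\<^sup>-\<^sup>1 (\<partial>\<^sub>x + s z)\<close>, which is \<open>z\<^sup>-\<^sup>1 dz s\<close> in the coordinates of \<open>lser_fps\<close>.\<close>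
definition dz_fps :: "complex \<Rightarrow> zfps \<Rightarrow> zfps" where
  "dz_fps s f = fps_X * deriv_x f + fps_const (fps_const s) * f"

lemma lser_fps_nth: "lser_fps K S $ k = xline (S (K - int k))"
  by (simp add: lser_fps_def)

lemma deriv_x_nth: "deriv_x f $ k = fps_deriv (f $ k)"
  by (simp add: deriv_x_def)

lemma deriv_x_add [simp]: "deriv_x (f + g) = deriv_x f + deriv_x g"
  by (rule fps_ext) (simp add: deriv_x_nth)

lemma deriv_x_diff [simp]: "deriv_x (f - g) = deriv_x f - deriv_x g"
  by (rule fps_ext) (simp add: deriv_x_nth)

lemma deriv_x_mult [simp]: "deriv_x (f * g) = deriv_x f * g + f * deriv_x g"
proof (rule fps_ext)
  fix n
  have "deriv_x (f * g) $ n =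
      (\<Sum>i=0..n. fps_deriv (f $ i) * g $ (n - i) + f $ i * fps_deriv (g $ (n - i)))"
    by (simp add: deriv_x_nth fps_mult_nth fps_deriv_sum algebra_simps)
  then show "deriv_x (f * g) $ n = (deriv_x f * g + f * deriv_x g) $ n"
    by (simp add: deriv_x_nth fps_mult_nth sum.distrib)
qed

lemma deriv_x_0 [simp]: "deriv_x 0 = 0"
  by (rule fps_ext) (simp add: deriv_x_nth)

lemma deriv_x_const [simp]: "deriv_x (fps_const c) = fps_const (fps_deriv c)"
  by (rule fps_ext) (simp add: deriv_x_nth)

lemma deriv_x_X [simp]: "deriv_x fps_X = 0"
  by (rule fps_ext) (simp add: deriv_x_nth fps_X_def)

lemma deriv_x_X_power [simp]: "deriv_x (fps_X ^ d) = 0"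
  by (induction d) (simp_all, rule fps_ext, simp add: deriv_x_nth)

lemma lser_fps_mult_left: "lser_fps K (\<lambda>n. ps_mult f (A n)) = fps_const (xline f) * lser_fps K A"
  by (rule fps_ext) (simp add: lser_fps_nth xline_mult)

lemma lser_fps_sum: "lser_fps K (\<lambda>n m. \<Sum>j\<in>J. F j n m) = (\<Sum>j\<in>J. lser_fps K (F j))"
  by (rule fps_ext) (simp add: lser_fps_nth fps_sum_nth xline_sum)

lemma lser_fps_shift: "lser_fps K (\<lambda>n. A (n - d)) = lser_fps (K - d) A"
  by (rule fps_ext) (simp add: lser_fps_nth algebra_simps)

lemma lser_fps_raise:
  assumes "lser_bounded K A"
  shows "lser_fps (K + int d) A = fps_X ^ d * lser_fps K A"
proof (rule fps_ext)
  fix k :: nat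
  show "lser_fps (K + int d) A $ k = (fps_X ^ d * lser_fps K A) $ k"
  proof (cases "k < d")
    case True
    then have "A (K + int d - int k) = ps0"
      using assms by (simp add: lser_bounded_def)
    with True show ?thesis
      by (simp add: lser_fps_nth fps_X_power_mult_nth)
  next
    case False
    then show ?thesis
      by (simp add: fps_X_power_mult_nth) (simp add: lser_fps_nth of_nat_diff algebra_simps)
  qed
qed

lemma lser_bounded_dz: "lser_bounded K A \<Longrightarrow> lser_bounded (K + 1) (dz s A)"
  by (simp add: lser_bounded_def dz_def ps_add_def ps_deriv_def ps_smult_def ps0_def fun_eq_iff)

lemma lser_bounded_dz_power: "lser_bounded K A \<Longrightarrow> lser_bounded (K + int i) ((dz s ^^ i) A)"
proof (induction i)
  case (Suc i)
  then show ?case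
    using lser_bounded_dz[of "K + int i" "(dz s ^^ i) A" s] by (simp add: algebra_simps)
qed simp

lemma lser_fps_dz:
  assumes "lser_bounded K A"
  shows "lser_fps (K + 1) (dz s A) = dz_fps s (lser_fps K A)"
proof (rule fps_ext)
  fix k :: nat
  have "A (K + 1) = ps0"
    using assms by (simp add: lser_bounded_def)
  then show "lser_fps (K + 1) (dz s A) $ k = dz_fps s (lser_fps K A) $ k"
    by (cases k) (simp_all add: dz_fps_def lser_fps_nth deriv_x_nth dz_def xline_add
        xline_deriv xline_smult fps_X_mult_nth algebra_simps)
qed

lemma lser_fps_dz_power:
  "lser_bounded K A \<Longrightarrow> lser_fps (K + int i) ((dz s ^^ i) A) = (dz_fps s ^^ i) (lser_fps K A)"
proof (induction i)
  case (Suc i)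
  have "lser_fps (K + int (Suc i)) ((dz s ^^ Suc i) A) =
      lser_fps (K + int i + 1) (dz s ((dz s ^^ i) A))"
    by (simp add: algebra_simps)
  also have "\<dots> = dz_fps s (lser_fps (K + int i) ((dz s ^^ i) A))"
    using Suc.prems by (intro lser_fps_dz lser_bounded_dz_power)
  finally show ?case
    using Suc by simp
qed simp

lemma lser_fps_lprod:
  assumes A: "lser_bounded K1 A" and B: "lser_bounded K2 B"
  shows "lser_fps (K1 + K2) (lprod A B) = lser_fps K1 A * lser_fps K2 B"
proof (rule fps_ext)
  fix k :: nat
  define g where "g = (\<lambda>(a, b). xline (A a) * xline (B b))"
  define pairs where "pairs = {(a, b). a + b = K1 + K2 - int k \<and> A a \<noteq> ps0 \<and> B b \<noteq> ps0}"
  define h where "h = (\<lambda>i::nat. (K1 - int i, K2 - int k + int i))"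
  have "lser_fps (K1 + K2) (lprod A B) $ k = sum g pairs"
    by (rule fps_ext) (simp add: lser_fps_nth xline_nth lprod_def fps_sum_nth g_def pairs_def
        split_def flip: xline_mult)
  also have "\<dots> = sum g (h ` {0..k})"
  proof (rule sum.mono_neutral_left)
    show "pairs \<subseteq> h ` {0..k}"
    proof
      fix p assume "p \<in> pairs"
      then obtain a b where p: "p = (a, b)" "a + b = K1 + K2 - int k" "A a \<noteq> ps0" "B b \<noteq> ps0"
        by (auto simp: pairs_def)
      then have "a \<le> K1" "b \<le> K2"
        using A B by (auto simp: lser_bounded_def not_less[symmetric])
      with p have "p = h (nat (K1 - a))" "nat (K1 - a) \<in> {0..k}"
        by (auto simp: h_def)
      then show "p \<in> h ` {0..k}" by blast
    qed
  qed (auto simp: h_def pairs_def g_def)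
  also have "\<dots> = (\<Sum>i=0..k. g (h i))"
    by (subst sum.reindex) (auto simp: inj_on_def h_def)
  also have "\<dots> = (lser_fps K1 A * lser_fps K2 B) $ k"
    by (auto simp: fps_mult_nth lser_fps_nth g_def h_def of_nat_diff algebra_simps intro!: sum.cong)
  finally show "lser_fps (K1 + K2) (lprod A B) $ k = (lser_fps K1 A * lser_fps K2 B) $ k" .
qed

lemma lser_bounded_neg_ser: "lser_bounded 0 (neg_ser \<phi>)"
  by (simp add: lser_bounded_def neg_ser_def)

lemma lser_fps_neg_ser_nth: "lser_fps 0 (neg_ser \<phi>) $ k = xline (\<phi> k)"
  by (simp add: lser_fps_nth neg_ser_def)

lemma twist_app_Lop:
  "twist_app s (Lop u) A = (\<lambda>n m. \<Sum>j\<in>{0, 2}. ps_mult (Lop u j) ((dz s ^^ nat j) A n) m)"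
proof -
  have "{j. 0 \<le> j \<and> Lop u j \<noteq> ps0} \<subseteq> {0, 2}"
    by (auto simp: Lop_def)
  then show ?thesis
    unfolding twist_app_def by (intro ext sum.mono_neutral_left) (auto simp: ps_mult_def ps0_def)
qed

lemma wave_equation_fps:
  assumes "twist_app s (Lop u) (neg_ser \<phi>) = (\<lambda>n. neg_ser \<phi> (n - 2))"
  shows "dz_fps s (dz_fps s (lser_fps 0 (neg_ser \<phi>)))
      + fps_const (2 * xline u) * (fps_X ^ 2 * lser_fps 0 (neg_ser \<phi>)) = lser_fps 0 (neg_ser \<phi>)"
proof -
  let ?A = "neg_ser \<phi>"
  have "lser_fps 2 (twist_app s (Lop u) ?A) = lser_fps 0 ?A"
    using assms lser_fps_shift[of 2 ?A 2] by simp
  moreover have "lser_fps 2 (twist_app s (Lop u) ?A) =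
      fps_const (xline (Lop u 0)) * lser_fps 2 ?A
      + fps_const (xline (Lop u 2)) * lser_fps 2 ((dz s ^^ 2) ?A)"
    unfolding twist_app_Lop lser_fps_sum by (simp add: lser_fps_mult_left)
  moreover have "lser_fps 2 ?A = fps_X ^ 2 * lser_fps 0 ?A"
    using lser_fps_raise[OF lser_bounded_neg_ser, of 2] by simp
  moreover have "lser_fps 2 ((dz s ^^ 2) ?A) = dz_fps s (dz_fps s (lser_fps 0 ?A))"
    using lser_fps_dz_power[OF lser_bounded_neg_ser, of 2] by (simp add: numeral_2_eq_2)
  ultimately show ?thesis
    by (simp add: Lop_def xline_smult algebra_simps flip: numeral_fps_const)
qed

lemma dual_residue_fps:
  assumes "lprod ((dz 1 ^^ i) (neg_ser \<phi>)) (neg_ser \<phi>s) (-1) = ps0"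
  shows "((dz_fps 1 ^^ i) (lser_fps 0 (neg_ser \<phi>)) * lser_fps 0 (neg_ser \<phi>s)) $ (i + 1) = 0"
proof -
  have "(dz_fps 1 ^^ i) (lser_fps 0 (neg_ser \<phi>)) * lser_fps 0 (neg_ser \<phi>s) =
        lser_fps (int i + 0) (lprod ((dz 1 ^^ i) (neg_ser \<phi>)) (neg_ser \<phi>s))"
    using lser_fps_lprod[OF lser_bounded_dz_power[OF lser_bounded_neg_ser] lser_bounded_neg_ser]
      lser_fps_dz_power[OF lser_bounded_neg_ser, of i 1 \<phi>] by simp
  with assms show ?thesis
    by (simp add: lser_fps_nth)
qed

section \<open>The Wronskian of \<open>\<psi>\<close> and \<open>\<psi>\<^sup>*\<close>\<close>

definition neg_z :: "zfps \<Rightarrow> zfps" where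
  "neg_z f = Abs_fps (\<lambda>k. (-1) ^ k * f $ k)"

lemma neg_z_nth: "neg_z f $ k = (-1) ^ k * f $ k"
  by (simp add: neg_z_def)

lemma neg_z_add [simp]: "neg_z (f + g) = neg_z f + neg_z g"
  by (rule fps_ext) (simp add: neg_z_nth algebra_simps)

lemma neg_z_diff [simp]: "neg_z (f - g) = neg_z f - neg_z g"
  by (rule fps_ext) (simp add: neg_z_nth algebra_simps)

lemma neg_z_const [simp]: "neg_z (fps_const c) = fps_const c"
  by (rule fps_ext) (simp add: neg_z_nth)

lemma neg_z_0 [simp]: "neg_z 0 = 0"
  by (rule fps_ext) (simp add: neg_z_nth)

lemma neg_z_X [simp]: "neg_z fps_X = - fps_X"
  by (rule fps_ext) (simp add: neg_z_nth fps_X_def)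

lemma neg_z_deriv_x [simp]: "neg_z (deriv_x f) = deriv_x (neg_z f)"
proof -
  have "(-1 :: complex fps) ^ k = fps_const ((-1) ^ k)" for k
    by (induction k) (simp_all flip: fps_const_mult)
  then show ?thesis
    by (intro fps_ext) (simp add: neg_z_nth deriv_x_nth)
qed

lemma neg_z_mult [simp]: "neg_z (f * g) = neg_z f * neg_z g"
proof (rule fps_ext)
  fix n
  have "(-1 :: complex fps) ^ n = (-1) ^ i * (-1) ^ (n - i)" if "i \<le> n" for i
    using that by (simp flip: power_add)
  then have "neg_z (f * g) $ n = (\<Sum>i=0..n. (-1) ^ i * f $ i * ((-1) ^ (n - i) * g $ (n - i)))"
    unfolding neg_z_nth fps_mult_nth sum_distrib_left
    by (intro sum.cong) (simp_all add: algebra_simps)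
  then show "neg_z (f * g) $ n = (neg_z f * neg_z g) $ n"
    by (simp add: fps_mult_nth neg_z_nth)
qed

lemma deriv_x_eigenvector_eq_0:
  assumes "fps_X * deriv_x R = fps_const c * R" and "c \<noteq> 0"
  shows "R = 0"
proof -
  have eq: "(fps_X * deriv_x R) $ k = c * R $ k" for k
    using assms(1) by simp
  have "R $ k = 0" for k
  proof (induction k)
    case 0
    then show ?case using eq[of 0] assms(2) by simp
  next
    case (Suc k)
    then show ?case using eq[of "Suc k"] assms(2) by (simp add: deriv_x_nth)
  qed
  then show ?thesis
    by (simp add: fps_ext)
qed

text \<open>\<open>wave_ode s U f\<close> is \<open>z\<^sup>-\<^sup>1 e\<^sup>-\<^sup>s\<^sup>x\<^sup>z (\<partial>\<^sub>x\<^sup>2 + U - z\<^sup>2) (f e\<^sup>s\<^sup>x\<^sup>z) = 0\<close>.\<close>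
definition wave_ode :: "complex \<Rightarrow> complex fps \<Rightarrow> zfps \<Rightarrow> bool" where
  "wave_ode s U f \<longleftrightarrow>
     fps_X * deriv_x (deriv_x f) + fps_const (fps_const (2 * s)) * deriv_x f
       + fps_const U * (fps_X * f) = 0"

lemma wave_odeI:
  assumes "dz_fps s (dz_fps s f) + fps_const U * (fps_X ^ 2 * f) = f" and "s\<^sup>2 = 1"
  shows "wave_ode s U f"
proof -
  have "fps_const (fps_const (s * s)) = (1 :: zfps)"
    using assms(2) by (simp add: power2_eq_square)
  then have "fps_X * (fps_X * deriv_x (deriv_x f) + fps_const (fps_const (2 * s)) * deriv_x f
      + fps_const U * (fps_X * f)) = 0"
    using assms(1) unfolding dz_fps_def
    by (simp add: power2_eq_square algebra_simps
        flip: fps_const_mult fps_const_add numeral_fps_const)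
  then show ?thesis
    by (simp add: wave_ode_def)
qed

lemma wave_ode_neg_z: "wave_ode s U f \<Longrightarrow> wave_ode (- s) U (neg_z f)"
  unfolding wave_ode_def
  by (drule arg_cong[where f = neg_z]) (simp add: algebra_simps flip: fps_const_neg)

lemma wave_ode_wronskian_eq_0:
  assumes f: "wave_ode s U f" and g: "wave_ode s U g" and "s \<noteq> 0"
  shows "f * deriv_x g - deriv_x f * g = 0"
proof (rule deriv_x_eigenvector_eq_0)
  let ?c = "fps_const (fps_const (2 * s)) :: zfps"
  have f'': "fps_X * deriv_x (deriv_x f) = - (?c * deriv_x f + fps_const U * (fps_X * f))"
    using f unfolding wave_ode_def by (intro eq_neg_iff_add_eq_0[THEN iffD2]) (simp add: add.assoc)
  have g'': "fps_X * deriv_x (deriv_x g) = - (?c * deriv_x g + fps_const U * (fps_X * g))"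
    using g unfolding wave_ode_def by (intro eq_neg_iff_add_eq_0[THEN iffD2]) (simp add: add.assoc)
  have "fps_X * deriv_x (f * deriv_x g - deriv_x f * g) =
      f * (fps_X * deriv_x (deriv_x g)) - fps_X * deriv_x (deriv_x f) * g"
    by (simp add: algebra_simps)
  also have "\<dots> = fps_const (fps_const (- 2 * s)) * (f * deriv_x g - deriv_x f * g)"
    unfolding f'' g'' by (simp add: algebra_simps flip: fps_const_neg)
  finally show "fps_X * deriv_x (f * deriv_x g - deriv_x f * g) =
      fps_const (fps_const (- 2 * s)) * (f * deriv_x g - deriv_x f * g)" .
qed (use assms(3) in simp)

lemma dz_fps_add: "dz_fps s (f + g) = dz_fps s f + dz_fps s g"
  by (simp add: dz_fps_def algebra_simps)

lemma dz_fps_power_add: "(dz_fps s ^^ i) (f + g) = (dz_fps s ^^ i) f + (dz_fps s ^^ i) g"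
  by (induction i) (simp_all add: dz_fps_add)

inductive dz_span :: "zfps \<Rightarrow> nat \<Rightarrow> zfps \<Rightarrow> bool" for w where
  zero: "dz_span w K 0"
| gen: "i \<le> K \<Longrightarrow> dz_span w K (fps_const c * (fps_X ^ (K - i) * (dz_fps 1 ^^ i) w))"
| add: "dz_span w K a \<Longrightarrow> dz_span w K b \<Longrightarrow> dz_span w K (a + b)"

lemma dz_span_residue:
  assumes "\<And>i. ((dz_fps 1 ^^ i) w * y) $ (i + 1) = 0"
  shows "dz_span w K g \<Longrightarrow> (g * y) $ (K + 1) = 0"
proof (induction rule: dz_span.induct)
  case (gen i K c)
  have "(fps_const c * (fps_X ^ (K - i) * (dz_fps 1 ^^ i) w) * y) $ (K + 1)
      = c * ((dz_fps 1 ^^ i) w * y) $ (i + 1)"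
    using gen.hyps by (simp add: mult.assoc fps_X_power_mult_nth Suc_diff_le)
  with assms show ?case by simp
qed (simp_all add: distrib_right)

lemma dz_span_self: "dz_span w 0 w"
  using dz_span.gen[of 0 0 w 1] by simp

lemma dz_span_mult_const: "dz_span w K g \<Longrightarrow> dz_span w K (fps_const c * g)"
proof (induction rule: dz_span.induct)
  case (gen i K c')
  have "fps_const c * (fps_const c' * (fps_X ^ (K - i) * (dz_fps 1 ^^ i) w)) =
      fps_const (c * c') * (fps_X ^ (K - i) * (dz_fps 1 ^^ i) w)"
    by (simp add: mult.assoc[symmetric])
  with gen show ?case
    by (metis dz_span.gen)
qed (simp_all add: distrib_left dz_span.intros)

lemma dz_span_mult_X: "dz_span w K g \<Longrightarrow> dz_span w (Suc K) (fps_X * g)"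
proof (induction rule: dz_span.induct)
  case (gen i K c)
  then have "fps_X * (fps_const c * (fps_X ^ (K - i) * (dz_fps 1 ^^ i) w)) =
      fps_const c * (fps_X ^ (Suc K - i) * (dz_fps 1 ^^ i) w)"
    by (simp add: Suc_diff_le ac_simps)
  moreover have "i \<le> Suc K"
    using gen by simp
  ultimately show ?case
    by (metis dz_span.gen)
qed (simp_all add: distrib_left dz_span.intros)

lemma dz_span_mult_X_power: "dz_span w K g \<Longrightarrow> dz_span w (K + m) (fps_X ^ m * g)"
  by (induction m) (simp_all add: dz_span_mult_X mult.assoc)

lemma dz_span_dz_fps: "dz_span w K g \<Longrightarrow> dz_span w (Suc K) (dz_fps 1 g)"
proof (induction rule: dz_span.induct)
  case zero
  then show ?case
    using dz_span.zero by (simp add: dz_fps_def)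
next
  case (gen i K c)
  let ?v = "(dz_fps 1 ^^ i) w"
  have "dz_fps 1 (fps_const c * (fps_X ^ (K - i) * ?v)) =
      fps_const (fps_deriv c) * (fps_X ^ (Suc K - i) * ?v)
      + fps_const c * (fps_X ^ (Suc K - Suc i) * (dz_fps 1 ^^ Suc i) w)"
    using gen.hyps by (simp add: dz_fps_def Suc_diff_le algebra_simps)
  moreover have "dz_span w (Suc K) (fps_const (fps_deriv c) * (fps_X ^ (Suc K - i) * ?v))"
    using gen.hyps by (intro dz_span.gen) simp
  moreover have
    "dz_span w (Suc K) (fps_const c * (fps_X ^ (Suc K - Suc i) * (dz_fps 1 ^^ Suc i) w))"
    using gen.hyps by (intro dz_span.gen) simp
  ultimately show ?case
    by (simp add: dz_span.add)
next
  case (add K a b)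
  then show ?case
    by (simp add: dz_fps_add dz_span.add)
qed

lemma dz_span_dz_fps_power: "dz_span w K g \<Longrightarrow> dz_span w (K + m) ((dz_fps 1 ^^ m) g)"
  by (induction m) (simp_all add: dz_span_dz_fps)

text \<open>The wave equation trades two applications of \<open>dz_fps 1\<close> for the factor \<open>X\<^sup>2\<close>, so the
  weight can be raised by two.\<close>
lemma dz_span_weight_add_2:
  assumes wave: "dz_fps 1 (dz_fps 1 w) + fps_const U * (fps_X ^ 2 * w) = w"
  shows "dz_span w K g \<Longrightarrow> dz_span w (K + 2) g"
proof (induction rule: dz_span.induct)
  case (gen i K c)
  let ?r = "fps_const U * (fps_X ^ 2 * w)"
  have "w = (dz_fps 1 ^^ 2) w + ?r"
    using wave by (simp add: numeral_2_eq_2)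
  then have "(dz_fps 1 ^^ i) w = (dz_fps 1 ^^ i) ((dz_fps 1 ^^ 2) w) + (dz_fps 1 ^^ i) ?r"
    by (metis dz_fps_power_add)
  then have split: "(dz_fps 1 ^^ i) w = (dz_fps 1 ^^ (i + 2)) w + (dz_fps 1 ^^ i) ?r"
    by (simp only: funpow_add comp_apply)
  have "dz_span w 2 ?r"
    using dz_span_mult_const[OF dz_span_mult_X_power[OF dz_span_self, of w 2]]
    by (simp add: numeral_2_eq_2)
  then have "dz_span w (2 + i + (K - i)) (fps_const c * (fps_X ^ (K - i) * (dz_fps 1 ^^ i) ?r))"
    by (rule dz_span_mult_const[OF dz_span_mult_X_power[OF dz_span_dz_fps_power]])
  moreover have
    "dz_span w (K + 2) (fps_const c * (fps_X ^ (K + 2 - (i + 2)) * (dz_fps 1 ^^ (i + 2)) w))"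
    using gen by (intro dz_span.gen) simp
  moreover have "2 + i + (K - i) = K + 2" "K + 2 - (i + 2) = K - i"
    using gen.hyps by simp_all
  ultimately show ?case
    unfolding split distrib_left by (metis dz_span.add add.commute)
qed (simp_all add: dz_span.intros)

lemma dz_span_wave:
  assumes "dz_fps 1 (dz_fps 1 w) + fps_const U * (fps_X ^ 2 * w) = w"
  shows "dz_span w (2 * j) w" and "dz_span w (2 * j + 1) (dz_fps 1 w)"
proof -
  show "dz_span w (2 * j) w"
  proof (induction j)
    case (Suc j)
    then show ?case
      using dz_span_weight_add_2[OF assms Suc.IH] by simp
  qed (simp add: dz_span_self)
  show "dz_span w (2 * j + 1) (dz_fps 1 w)"
  proof (induction j)
    case (Suc j)
    then show ?case
      using dz_span_weight_add_2[OF assms Suc.IH] by simp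
  qed (use dz_span_dz_fps[OF dz_span_self] in simp)
qed

lemma wave_product_even:
  assumes wave: "dz_fps 1 (dz_fps 1 w) + fps_const U * (fps_X ^ 2 * w) = w"
    and residue: "\<And>i. ((dz_fps 1 ^^ i) w * y) $ (i + 1) = 0"
  shows "neg_z (w * y) = w * y"
proof (rule fps_ext)
  fix k
  show "neg_z (w * y) $ k = (w * y) $ k"
    unfolding neg_z_nth
  proof (cases "even k")
    case False
    then obtain j where "k = 2 * j + 1"
      by (metis oddE)
    then show "(-1) ^ k * (w * y) $ k = (w * y) $ k"
      using dz_span_residue[OF residue dz_span_wave(1)[OF wave, of j]] by simp
  qed simp
qed

lemma wave_dz_product_neg_z:
  assumes wave: "dz_fps 1 (dz_fps 1 w) + fps_const U * (fps_X ^ 2 * w) = w"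
    and residue: "\<And>i. ((dz_fps 1 ^^ i) w * y) $ (i + 1) = 0"
    and "w $ 0 = 1" and "y $ 0 = 1"
  shows "neg_z (dz_fps 1 w * y) = 2 - dz_fps 1 w * y"
proof (rule fps_ext)
  fix k
  show "neg_z (dz_fps 1 w * y) $ k = (2 - dz_fps 1 w * y) $ k"
    unfolding neg_z_nth
  proof (cases "even k \<and> k \<noteq> 0")
    case True
    then obtain j where "k = 2 * j + 2"
      by (intro that[of "k div 2 - 1"]) auto
    then show "(-1) ^ k * (dz_fps 1 w * y) $ k = (2 - dz_fps 1 w * y) $ k"
      using dz_span_residue[OF residue dz_span_wave(2)[OF wave, of j]]
      by (simp add: fps_numeral_nth)
  next
    case False
    then consider "k = 0" | "odd k"
      by blast
    then show "(-1) ^ k * (dz_fps 1 w * y) $ k = (2 - dz_fps 1 w * y) $ k"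
      by cases (use assms(3,4) in \<open>simp_all add: fps_numeral_nth dz_fps_def odd_pos\<close>)
  qed
qed

lemma wave_wronskian_neg_z:
  assumes wave: "dz_fps 1 (dz_fps 1 w) + fps_const U * (fps_X ^ 2 * w) = w"
    and dual_wave: "dz_fps (-1) (dz_fps (-1) y) + fps_const U * (fps_X ^ 2 * y) = y"
  shows "w * neg_z (dz_fps (-1) y) + dz_fps 1 w * neg_z y = 0"
proof -
  have "wave_ode 1 U w" and "wave_ode 1 U (neg_z y)"
    using wave wave_ode_neg_z[OF wave_odeI[OF dual_wave]] by (simp_all add: wave_odeI)
  then have wronskian: "w * deriv_x (neg_z y) - deriv_x w * neg_z y = 0"
    by (rule wave_ode_wronskian_eq_0) simp
  have "w * neg_z (dz_fps (-1) y) + dz_fps 1 w * neg_z y =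
      - fps_X * (w * deriv_x (neg_z y) - deriv_x w * neg_z y)"
    by (simp add: dz_fps_def algebra_simps flip: fps_const_neg)
  then show ?thesis
    unfolding wronskian by simp
qed

lemma wave_wronskian:
  assumes wave: "dz_fps 1 (dz_fps 1 w) + fps_const U * (fps_X ^ 2 * w) = w"
    and dual_wave: "dz_fps (-1) (dz_fps (-1) y) + fps_const U * (fps_X ^ 2 * y) = y"
    and residue: "\<And>i. ((dz_fps 1 ^^ i) w * y) $ (i + 1) = 0"
    and w0: "w $ 0 = 1" and y0: "y $ 0 = 1"
  shows "w * dz_fps (-1) y - dz_fps 1 w * y = -2"
proof -
  let ?w' = "neg_z w" and ?y' = "neg_z y"
  have "wave_ode (-1) U ?w'" and "wave_ode (-1) U y"
    using wave_ode_neg_z[OF wave_odeI[OF wave]] dual_wave by (simp_all add: wave_odeI)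
  then have wronskian: "?w' * deriv_x y - deriv_x ?w' * y = 0"
    by (rule wave_ode_wronskian_eq_0) simp
  have even: "?w' * ?y' - w * y = 0"
    using wave_product_even[OF wave residue] by simp
  have dz_even: "(?w' - fps_X * deriv_x ?w') * ?y' - (2 - dz_fps 1 w * y) = 0"
    using wave_dz_product_neg_z[OF wave residue w0 y0] by (simp add: dz_fps_def)
  \<comment> \<open>\<open>y\<close> is a multiple of \<open>neg_z w\<close>; the two parity facts pin down the factor.\<close>
  have "?w' * (w * dz_fps (-1) y - dz_fps 1 w * y + 2) =
      fps_X * w * (?w' * deriv_x y - deriv_x ?w' * y)
      + (?w' - fps_X * deriv_x ?w') * (?w' * ?y' - w * y)
      - ?w' * ((?w' - fps_X * deriv_x ?w') * ?y' - (2 - dz_fps 1 w * y))"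
    by (simp add: dz_fps_def algebra_simps flip: fps_const_neg)
  also have "\<dots> = 0"
    unfolding wronskian even dz_even by simp
  finally have "?w' * (w * dz_fps (-1) y - dz_fps 1 w * y + 2) = 0" .
  moreover have "?w' \<noteq> 0"
    using w0 by (metis fps_nonzero_nth one_neq_zero neg_z_nth mult_1 power_0)
  ultimately show ?thesis
    by (simp add: eq_neg_iff_add_eq_0)
qed

section \<open>Divisibility by \<open>w\<^sup>2 - z\<^sup>2\<close>\<close>

definition parity_sign :: "int \<Rightarrow> complex" where
  "parity_sign n = (if even n then 1 else -1)"

definition neg_w :: "ser2 \<Rightarrow> ser2" where
  "neg_w S = (\<lambda>a b. parity_sign b * S a b)"

definition degrees_le_1 :: "ser2 \<Rightarrow> bool" where
  "degrees_le_1 S \<longleftrightarrow> (\<forall>a b. 1 < a \<or> 1 < b \<longrightarrow> S a b = 0)"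

text \<open>For \<open>degrees_le_1 S\<close>, \<open>diag_coeff S N\<close> is the coefficient of \<open>z\<^sup>N\<close> in \<open>S(z, z)\<close>.\<close>
definition diag_coeff :: "ser2 \<Rightarrow> int \<Rightarrow> complex" where
  "diag_coeff S N = (\<Sum>a\<in>{N - 1..1}. S a (N - a))"

text \<open>\<open>diag_fps S\<close> is \<open>z\<^sup>-\<^sup>2 S(z, z)\<close> as a power series in \<open>z\<^sup>-\<^sup>1\<close>.\<close>
definition diag_fps :: "ser2 \<Rightarrow> complex fps" where
  "diag_fps S = Abs_fps (\<lambda>m. diag_coeff S (2 - int m))"

lemma diag_coeff_eq_0: "diag_fps S = 0 \<Longrightarrow> diag_coeff S N = 0"
proof (cases "N \<le> 2")
  case True
  assume "diag_fps S = 0"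
  then have "diag_fps S $ nat (2 - N) = 0"
    by simp
  with True show ?thesis
    by (simp add: diag_fps_def)
qed (simp add: diag_coeff_def)

definition vanishes_on_diagonals :: "ser2 \<Rightarrow> bool" where
  "vanishes_on_diagonals S \<longleftrightarrow> degrees_le_1 S \<and> diag_fps S = 0 \<and> diag_fps (neg_w S) = 0"

text \<open>The solution \<open>F\<close> of \<open>S = (w\<^sup>2 - z\<^sup>2) F\<close> without positive powers of \<open>w\<close>; the diagonal
  conditions remove its positive powers of \<open>z\<close>.\<close>
definition w2_z2_quotient :: "ser2 \<Rightarrow> int \<Rightarrow> int \<Rightarrow> complex" where
  "w2_z2_quotient S p q = (\<Sum>k<nat (1 - q). S (p - 2 * int k) (q + 2 + 2 * int k))"

lemma w2_z2_quotient_extend: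
  assumes "degrees_le_1 S" and "nat (1 - q) \<le> n"
  shows "w2_z2_quotient S p q = (\<Sum>k<n. S (p - 2 * int k) (q + 2 + 2 * int k))"
  unfolding w2_z2_quotient_def
  by (rule sum.mono_neutral_left) (use assms in \<open>auto simp: degrees_le_1_def\<close>)

lemma mul_w2_z2_quotient:
  assumes "degrees_le_1 S"
  shows "S a b = w2_z2_quotient S a (b - 2) - w2_z2_quotient S (a - 2) b"
proof -
  define m where "m = nat (3 - b)"
  have "w2_z2_quotient S a (b - 2) = (\<Sum>k<Suc m. S (a - 2 * int k) (b - 2 + 2 + 2 * int k))"
    using assms by (rule w2_z2_quotient_extend) (simp add: m_def)
  also have "\<dots> = S a b + (\<Sum>k<m. S (a - 2 - 2 * int k) (b + 2 + 2 * int k))"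
    by (subst sum.lessThan_Suc_shift) (simp add: algebra_simps)
  also have "(\<Sum>k<m. S (a - 2 - 2 * int k) (b + 2 + 2 * int k)) = w2_z2_quotient S (a - 2) b"
    using assms by (intro w2_z2_quotient_extend[symmetric]) (auto simp: m_def intro: nat_mono)
  finally show ?thesis
    by simp
qed

lemma sum_parity_class:
  fixes f :: "int \<Rightarrow> complex"
  assumes "finite I"
  shows "(\<Sum>a\<in>{a\<in>I. even (a - p)}. f a) =
    ((\<Sum>a\<in>I. f a) + (\<Sum>a\<in>I. parity_sign (a - p) * f a)) / 2"
proof -
  have "(\<Sum>a\<in>{a\<in>I. even (a - p)}. f a) = (\<Sum>a\<in>I. if even (a - p) then f a else 0)"
    using assms by (rule sum.inter_filter)
  also have "\<dots> = (\<Sum>a\<in>I. (f a + parity_sign (a - p) * f a) / 2)"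
    by (intro sum.cong) (simp_all add: parity_sign_def)
  also have "\<dots> = ((\<Sum>a\<in>I. f a) + (\<Sum>a\<in>I. parity_sign (a - p) * f a)) / 2"
    unfolding sum_divide_distrib[symmetric] sum.distrib ..
  finally show ?thesis .
qed

lemma w2_z2_quotient_eq_parity_class_sum:
  assumes "degrees_le_1 S" and "0 < p"
  shows "w2_z2_quotient S p q =
    (\<Sum>a\<in>{a\<in>{p + q + 1..1}. even (a - p)}. S a (p + q + 2 - a))"
proof -
  define N where "N = p + q + 2"
  define f where "f a = S a (N - a)" for a
  define I where "I = {N - 1..(1::int)}"
  define h where "h k = p - 2 * int k" for k
  have "w2_z2_quotient S p q = (\<Sum>k<nat (1 - q). f (h k))"
    by (simp add: w2_z2_quotient_def f_def h_def N_def algebra_simps)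
  also have "\<dots> = (\<Sum>a\<in>h ` {..<nat (1 - q)}. f a)"
    by (subst sum.reindex) (auto simp: inj_on_def h_def)
  also have "\<dots> = (\<Sum>a\<in>{a\<in>I. even (a - p)}. f a)"
  proof (rule sum.mono_neutral_right)
    show "{a\<in>I. even (a - p)} \<subseteq> h ` {..<nat (1 - q)}"
    proof
      fix a assume "a \<in> {a\<in>I. even (a - p)}"
      then have a: "N - 1 \<le> a" "a \<le> 1" "even (p - a)"
        by (auto simp: I_def)
      obtain k where k: "p - a = 2 * k"
        using a(3) by (rule evenE)
      with a assms(2) have "a = h (nat k)" "nat k < nat (1 - q)"
        by (auto simp: h_def N_def)
      then show "a \<in> h ` {..<nat (1 - q)}"
        by blast
    qed
    show "\<forall>a\<in>h ` {..<nat (1 - q)} - {a\<in>I. even (a - p)}. f a = 0"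
    proof
      fix a assume "a \<in> h ` {..<nat (1 - q)} - {a\<in>I. even (a - p)}"
      then have "a \<notin> I"
        by (auto simp: h_def)
      with assms(1) show "f a = 0"
        by (auto simp: I_def f_def degrees_le_1_def)
    qed
  qed simp
  finally show ?thesis
    by (simp add: f_def I_def N_def algebra_simps)
qed

lemma w2_z2_quotient_eq_0:
  assumes "vanishes_on_diagonals S" and "0 < p"
  shows "w2_z2_quotient S p q = 0"
proof -
  define N where "N = p + q + 2"
  define I where "I = {N - 1..(1::int)}"
  have diag: "diag_coeff S N = 0" "diag_coeff (neg_w S) N = 0"
    using assms(1) by (simp_all add: vanishes_on_diagonals_def diag_coeff_eq_0)
  have "parity_sign (a - p) = parity_sign q * parity_sign (N - a)" for a
    unfolding parity_sign_def N_def by (auto; presburger)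
  then have signed: "(\<Sum>a\<in>I. parity_sign (a - p) * S a (N - a)) =
      parity_sign q * diag_coeff (neg_w S) N"
    by (simp add: diag_coeff_def neg_w_def I_def sum_distrib_left mult.assoc)
  have "w2_z2_quotient S p q = (\<Sum>a\<in>{a\<in>I. even (a - p)}. S a (N - a))"
    using assms by (simp add: w2_z2_quotient_eq_parity_class_sum vanishes_on_diagonals_def I_def
        N_def algebra_simps)
  also have "\<dots> = ((\<Sum>a\<in>I. S a (N - a)) + (\<Sum>a\<in>I. parity_sign (a - p) * S a (N - a))) / 2"
    by (rule sum_parity_class) (simp add: I_def)
  also have "\<dots> = 0"
    using diag unfolding signed by (simp add: diag_coeff_def I_def)
  finally show ?thesis .
qed

lemma div_by_w2_z2_if_vanishes_on_diagonals:
  assumes "vanishes_on_diagonals S"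
  shows "div_by_w2_z2 S"
proof -
  have degrees: "degrees_le_1 S"
    using assms by (simp add: vanishes_on_diagonals_def)
  define F where "F i j = w2_z2_quotient S (- int i) (- int j)" for i j
  have "ext2 F a b = w2_z2_quotient S a b" for a b
    using w2_z2_quotient_eq_0[OF assms] by (auto simp: ext2_def F_def w2_z2_quotient_def)
  then have "S = mul_w2_z2 (ext2 F)"
    using mul_w2_z2_quotient[OF degrees] by (simp add: mul_w2_z2_def fun_eq_iff)
  then show ?thesis
    unfolding div_by_w2_z2_def by blast
qed

text \<open>\<open>z\<^sup>-\<^sup>1 f(z)\<close> as a power series in \<open>z\<^sup>-\<^sup>1\<close>, for \<open>f\<close> of degree at most 1.\<close>
definition laurent_fps :: "(int \<Rightarrow> complex) \<Rightarrow> complex fps" where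
  "laurent_fps f = Abs_fps (\<lambda>k. f (1 - int k))"

definition neg_var :: "(int \<Rightarrow> complex) \<Rightarrow> int \<Rightarrow> complex" where
  "neg_var f = (\<lambda>b. parity_sign b * f b)"

lemma diag_fps_outer [simp]: "diag_fps (outer f g) = laurent_fps f * laurent_fps g"
proof (rule fps_ext)
  fix m
  have "diag_coeff (outer f g) (2 - int m) = (\<Sum>i=0..m. f (1 - int i) * g (1 - int (m - i)))"
    unfolding diag_coeff_def outer_def
    by (rule sum.reindex_bij_witness[of _ "\<lambda>i. 1 - int i" "\<lambda>a. nat (1 - a)"])
       (auto simp: of_nat_diff algebra_simps)
  then show "diag_fps (outer f g) $ m = (laurent_fps f * laurent_fps g) $ m"
    by (simp add: diag_fps_def laurent_fps_def fps_mult_nth)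
qed

lemma diag_fps_s2add [simp]: "diag_fps (s2add S T) = diag_fps S + diag_fps T"
  by (rule fps_ext) (simp add: diag_fps_def diag_coeff_def s2add_def sum.distrib)

lemma diag_fps_s2sub [simp]: "diag_fps (s2sub S T) = diag_fps S - diag_fps T"
  by (rule fps_ext) (simp add: diag_fps_def diag_coeff_def s2sub_def sum_subtractf)

lemma diag_fps_s2scale [simp]: "diag_fps (s2scale c S) = fps_const c * diag_fps S"
  by (rule fps_ext) (simp add: diag_fps_def diag_coeff_def s2scale_def sum_distrib_left)

lemma neg_w_outer [simp]: "neg_w (outer f g) = outer f (neg_var g)"
  by (simp add: neg_w_def outer_def neg_var_def fun_eq_iff ac_simps)

lemma neg_w_s2add [simp]: "neg_w (s2add S T) = s2add (neg_w S) (neg_w T)"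
  by (simp add: neg_w_def s2add_def fun_eq_iff algebra_simps)

lemma neg_w_s2sub [simp]: "neg_w (s2sub S T) = s2sub (neg_w S) (neg_w T)"
  by (simp add: neg_w_def s2sub_def fun_eq_iff algebra_simps)

lemma neg_w_s2scale [simp]: "neg_w (s2scale c S) = s2scale c (neg_w S)"
  by (simp add: neg_w_def s2scale_def fun_eq_iff algebra_simps)

lemma vanishes_on_diagonals_s2add:
  "vanishes_on_diagonals S \<Longrightarrow> vanishes_on_diagonals T \<Longrightarrow> vanishes_on_diagonals (s2add S T)"
  by (simp add: vanishes_on_diagonals_def) (simp add: degrees_le_1_def s2add_def)

lemma vanishes_on_diagonals_s2sub:
  "vanishes_on_diagonals S \<Longrightarrow> vanishes_on_diagonals T \<Longrightarrow> vanishes_on_diagonals (s2sub S T)"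
  by (simp add: vanishes_on_diagonals_def) (simp add: degrees_le_1_def s2sub_def)

lemma vanishes_on_diagonals_s2scale:
  "vanishes_on_diagonals S \<Longrightarrow> vanishes_on_diagonals (s2scale c S)"
  by (simp add: vanishes_on_diagonals_def) (simp add: degrees_le_1_def s2scale_def)

lemma laurent_fps_shift: "f 1 = 0 \<Longrightarrow> laurent_fps f = fps_X * laurent_fps (\<lambda>a. f (a - 1))"
  by (rule fps_ext) (auto simp: laurent_fps_def fps_X_mult_nth algebra_simps)

lemma laurent_fps_uminus: "laurent_fps (\<lambda>a. - f a) = - laurent_fps f"
  by (rule fps_ext) (simp add: laurent_fps_def)

lemma laurent_fps_delta0 [simp]: "laurent_fps delta0 = fps_X"
  by (rule fps_ext) (simp add: laurent_fps_def delta0_def fps_X_def)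

lemma laurent_fps_delta1 [simp]: "laurent_fps (\<lambda>a. delta0 (a - 1)) = 1"
  by (rule fps_ext) (simp add: laurent_fps_def delta0_def)

lemma neg_var_eq_self: "(\<And>b. odd b \<Longrightarrow> f b = 0) \<Longrightarrow> neg_var f = f"
  by (auto simp: neg_var_def parity_sign_def fun_eq_iff)

lemma neg_var_eq_uminus: "(\<And>b. even b \<Longrightarrow> f b = 0) \<Longrightarrow> neg_var f = (\<lambda>b. - f b)"
  by (auto simp: neg_var_def parity_sign_def fun_eq_iff)

lemma mulz_outer [simp]: "mulz (outer f g) = outer (\<lambda>a. f (a - 1)) g"
  by (simp add: mulz_def outer_def)

lemma mulw_outer [simp]: "mulw (outer f g) = outer f (\<lambda>b. g (b - 1))"
  by (simp add: mulw_def outer_def)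

lemma mulz_s2sub [simp]: "mulz (s2sub S T) = s2sub (mulz S) (mulz T)"
  by (simp add: mulz_def s2sub_def)

lemma mulw_s2sub [simp]: "mulw (s2sub S T) = s2sub (mulw S) (mulw T)"
  by (simp add: mulw_def s2sub_def)

text \<open>\<open>B(z) = b(z\<^sup>2)\<close> for a series \<open>b\<close> in \<open>\<lambda>\<^sup>-\<^sup>1\<close>.\<close>
definition even_series :: "(int \<Rightarrow> complex) \<Rightarrow> bool" where
  "even_series B \<longleftrightarrow> (\<forall>a. 0 < a \<or> odd a \<longrightarrow> B a = 0)"

lemma even_series_sq_ser: "even_series (sq_ser c)"
  by (simp add: even_series_def sq_ser_def)

lemma vanishes_on_diagonals_wedge:
  assumes "even_series B" and "even_series C"
  shows "vanishes_on_diagonals (s2sub (outer B C) (outer C B))"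
proof -
  have "neg_var B = B" "neg_var C = C"
    using assms by (simp_all add: even_series_def neg_var_eq_self)
  moreover have "degrees_le_1 (s2sub (outer B C) (outer C B))"
    using assms by (simp add: even_series_def degrees_le_1_def s2sub_def outer_def)
  ultimately show ?thesis
    by (simp add: vanishes_on_diagonals_def mult.commute)
qed

lemma vanishes_on_diagonals_mulz:
  assumes "even_series B"
  shows "vanishes_on_diagonals (mulz (s2sub (outer B delta0) (outer delta0 B)))"
proof -
  have "neg_var B = B"
    using assms by (simp add: even_series_def neg_var_eq_self)
  moreover have "neg_var delta0 = delta0"
    by (rule neg_var_eq_self) (auto simp: delta0_def)
  moreover have "laurent_fps B = fps_X * laurent_fps (\<lambda>a. B (a - 1))"
    using assms by (intro laurent_fps_shift) (simp add: even_series_def)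
  moreover have "degrees_le_1 (mulz (s2sub (outer B delta0) (outer delta0 B)))"
    using assms
    by (simp add: even_series_def degrees_le_1_def s2sub_def outer_def delta0_def mulz_def mulw_def)
  ultimately show ?thesis
    by (simp add: vanishes_on_diagonals_def mult.commute)
qed

lemma vanishes_on_diagonals_mulw:
  assumes "even_series B"
  shows "vanishes_on_diagonals (mulw (s2sub (outer B delta0) (outer delta0 B)))"
proof -
  have "neg_var (\<lambda>b. B (b - 1)) = (\<lambda>b. - B (b - 1))"
    using assms by (intro neg_var_eq_uminus) (simp add: even_series_def)
  moreover have "neg_var (\<lambda>b. delta0 (b - 1)) = (\<lambda>b. - delta0 (b - 1))"
    by (rule neg_var_eq_uminus) (auto simp: delta0_def)
  moreover have "laurent_fps B = fps_X * laurent_fps (\<lambda>a. B (a - 1))"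
    using assms by (intro laurent_fps_shift) (simp add: even_series_def)
  moreover have "degrees_le_1 (mulw (s2sub (outer B delta0) (outer delta0 B)))"
    using assms
    by (simp add: even_series_def degrees_le_1_def s2sub_def outer_def delta0_def mulz_def mulw_def)
  ultimately show ?thesis
    by (simp add: vanishes_on_diagonals_def laurent_fps_uminus)
qed

lemma even_series_divisibility:
  assumes "even_series B" and "even_series Bx"
  shows "(let M = s2sub (outer B Bx) (outer Bx B);
              D = s2sub (outer B delta0) (outer delta0 B)
          in div_by_w2_z2 (s2add (s2scale (1/2) M) (mulz D)) \<and>
             div_by_w2_z2 (s2sub (s2scale (1/2) M) (mulw D)) \<and>
             div_by_w2_z2 (s2add (s2scale (1/2) M) (s2scale (1/2) (s2sub (mulz D) (mulw D)))))"
  unfolding Let_def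
  using vanishes_on_diagonals_wedge[OF assms] vanishes_on_diagonals_mulz[OF assms(1)]
    vanishes_on_diagonals_mulw[OF assms(1)]
  by (intro conjI div_by_w2_z2_if_vanishes_on_diagonals vanishes_on_diagonals_s2add
      vanishes_on_diagonals_s2scale vanishes_on_diagonals_s2sub[of "s2scale _ _"]
      vanishes_on_diagonals_s2sub[of "mulz _"])

section \<open>Evaluation at \<open>x = 0\<close>\<close>

definition eval_x0 :: "zfps \<Rightarrow> complex fps" where
  "eval_x0 g = Abs_fps (\<lambda>k. g $ k $ 0)"

lemma eval_x0_add [simp]: "eval_x0 (f + g) = eval_x0 f + eval_x0 g"
  by (rule fps_ext) (simp add: eval_x0_def)

lemma eval_x0_diff [simp]: "eval_x0 (f - g) = eval_x0 f - eval_x0 g"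
  by (rule fps_ext) (simp add: eval_x0_def)

lemma eval_x0_uminus [simp]: "eval_x0 (- f) = - eval_x0 f"
  by (rule fps_ext) (simp add: eval_x0_def)

lemma eval_x0_mult [simp]: "eval_x0 (f * g) = eval_x0 f * eval_x0 g"
  by (rule fps_ext) (simp add: eval_x0_def fps_mult_nth fps_sum_nth)

lemma eval_x0_X [simp]: "eval_x0 fps_X = fps_X"
  by (rule fps_ext) (simp add: eval_x0_def fps_X_def)

lemma eval_x0_numeral [simp]: "eval_x0 (numeral n) = numeral n"
  by (rule fps_ext) (simp add: eval_x0_def fps_numeral_nth)

lemma eval_x0_0 [simp]: "eval_x0 0 = 0"
  by (rule fps_ext) (simp add: eval_x0_def)

lemma at0_eq_0: "lser_bounded K S \<Longrightarrow> K < a \<Longrightarrow> at0 S a = 0"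
  by (simp add: lser_bounded_def at0_def ps_at0_def ps0_def)

lemma laurent_fps_at0: "laurent_fps (at0 S) = eval_x0 (lser_fps 1 S)"
  by (rule fps_ext) (simp add: laurent_fps_def eval_x0_def lser_fps_nth xline_nth_0 at0_def)

lemma laurent_fps_neg_var_at0: "laurent_fps (neg_var (at0 S)) = - eval_x0 (neg_z (lser_fps 1 S))"
proof -
  have "(-1 :: complex fps) ^ k = fps_const ((-1) ^ k)" for k
    by (induction k) (simp_all flip: fps_const_mult)
  moreover have "parity_sign (1 - int k) = - ((-1) ^ k)" for k
    by (simp add: parity_sign_def)
  ultimately show ?thesis
    by (intro fps_ext) (simp add: laurent_fps_def neg_var_def eval_x0_def neg_z_nth lser_fps_nth
        xline_nth_0 at0_def)
qed

lemma wave_function_wronskian: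
  fixes u :: ps and \<phi> \<phi>s :: "nat \<Rightarrow> ps"
  defines "w \<equiv> lser_fps 0 (neg_ser \<phi>)" and "y \<equiv> lser_fps 0 (neg_ser \<phi>s)"
  assumes "wave_function u \<phi>" and "dual_wave_function u \<phi> \<phi>s"
  shows "w * dz_fps (-1) y - dz_fps 1 w * y = -2"
    and "w * neg_z (dz_fps (-1) y) + dz_fps 1 w * neg_z y = 0"
  unfolding w_def y_def using assms(3,4)
  by (intro wave_wronskian[where U = "2 * xline u"] wave_wronskian_neg_z[where U = "2 * xline u"]
      wave_equation_fps dual_residue_fps;
      simp add: wave_function_def dual_wave_function_def lser_fps_neg_ser_nth)+

lemma wave_pair_divisibility:
  assumes wave: "wave_function u \<phi>" and dual: "dual_wave_function u \<phi> \<phi>s"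
  shows "(let P = at0 (neg_ser \<phi>); Px = at0 (dz 1 (neg_ser \<phi>));
             Ps = at0 (neg_ser \<phi>s); Psx = at0 (dz (-1) (neg_ser \<phi>s))
         in div_by_w2_z2 (s2add (s2sub (outer P Psx) (outer Px Ps))
                                (s2add (outer delta0 (\<lambda>b. if b = 1 then 1 else 0))
                                       (outer (\<lambda>a. if a = 1 then 1 else 0) delta0))))"
proof -
  let ?W = "neg_ser \<phi>" and ?Y = "neg_ser \<phi>s"
  let ?w = "lser_fps 0 ?W" and ?y = "lser_fps 0 ?Y"
  let ?S = "s2add (s2sub (outer (at0 ?W) (at0 (dz (-1) ?Y))) (outer (at0 (dz 1 ?W)) (at0 ?Y)))
      (s2add (outer delta0 (\<lambda>b. delta0 (b - 1))) (outer (\<lambda>a. delta0 (a - 1)) delta0))"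
  note wronskian = wave_function_wronskian[OF wave dual]
  have bounded: "lser_bounded 1 ?W" "lser_bounded 1 ?Y" "lser_bounded 1 (dz 1 ?W)"
      "lser_bounded 1 (dz (-1) ?Y)"
    using lser_bounded_neg_ser lser_bounded_dz[OF lser_bounded_neg_ser]
    by (auto simp: lser_bounded_def)
  have fps: "lser_fps 1 ?W = fps_X * ?w" "lser_fps 1 ?Y = fps_X * ?y"
      "lser_fps 1 (dz 1 ?W) = dz_fps 1 ?w" "lser_fps 1 (dz (-1) ?Y) = dz_fps (-1) ?y"
    using lser_fps_raise[OF lser_bounded_neg_ser, of 1] lser_fps_dz[OF lser_bounded_neg_ser]
    by simp_all
  have "degrees_le_1 ?S"
    using bounded by (auto simp: degrees_le_1_def s2add_def s2sub_def outer_def delta0_def at0_eq_0)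
  moreover have "diag_fps ?S = eval_x0 (fps_X * (?w * dz_fps (-1) ?y - dz_fps 1 ?w * ?y + 2))"
    by (simp add: laurent_fps_at0 fps algebra_simps)
  moreover have "diag_fps (neg_w ?S) =
      - eval_x0 (fps_X * (?w * neg_z (dz_fps (-1) ?y) + dz_fps 1 ?w * neg_z ?y))"
  proof -
    have "neg_var delta0 = delta0" "neg_var (\<lambda>b. delta0 (b - 1)) = (\<lambda>b. - delta0 (b - 1))"
      by (auto intro!: neg_var_eq_self neg_var_eq_uminus simp: delta0_def)
    then show ?thesis
      by (simp add: laurent_fps_at0 laurent_fps_neg_var_at0 laurent_fps_uminus fps algebra_simps)
  qed
  ultimately have "vanishes_on_diagonals ?S"
    unfolding vanishes_on_diagonals_def wronskian by simp
  moreover have "(\<lambda>b. delta0 (b - 1)) = (\<lambda>b. if b = 1 then 1 else 0)"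
    by (auto simp: delta0_def)
  ultimately show ?thesis
    by (simp add: Let_def div_by_w2_z2_if_vanishes_on_diagonals)
qed

theorem corollary1p6:
  fixes u :: ps and \<phi> \<phi>s bb :: "nat \<Rightarrow> ps"
  assumes "kdv_solution u"
    and "wave_function u \<phi>"
    and "dual_wave_function u \<phi> \<phi>s"
    and "bb 0 = ps1" and "b_equation u bb"
  shows
    "(let P = at0 (neg_ser \<phi>); Px = at0 (dz 1 (neg_ser \<phi>));
         Ps = at0 (neg_ser \<phi>s); Psx = at0 (dz (-1) (neg_ser \<phi>s))
     in div_by_w2_z2 (s2add (s2sub (outer P Psx) (outer Px Ps))
                            (s2add (outer delta0 (\<lambda>b. if b = 1 then 1 else 0))
                                   (outer (\<lambda>a. if a = 1 then 1 else 0) delta0))))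
    \<and> (let B = sq_ser (\<lambda>j. ps_at0 (bb j)); Bx = sq_ser (\<lambda>j. ps_at0 (ps_deriv 0 (bb j)));
         M = s2sub (outer B Bx) (outer Bx B);
         D = s2sub (outer B delta0) (outer delta0 B)
     in div_by_w2_z2 (s2add (s2scale (1/2) M) (mulz D)) \<and>
        div_by_w2_z2 (s2sub (s2scale (1/2) M) (mulw D)) \<and>
        div_by_w2_z2 (s2add (s2scale (1/2) M) (s2scale (1/2) (s2sub (mulz D) (mulw D)))))"
  using wave_pair_divisibility[OF assms(2,3)]
    even_series_divisibility[OF even_series_sq_ser even_series_sq_ser]
  by (simp add: Let_def)

end
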